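(* Let $\bar\gamma_{\mathrm{R}},\bar\gamma_{\mathrm{D}},\bar\gamma_{\mathrm{E}}>0$ and $\mathcal{R}>0$. Let $h_{\mathrm{S},\mathrm{R}},h_{\mathrm{R},\mathrm{D}},h_{\mathrm{S},\mathrm{E}},h_{\mathrm{R},\mathrm{E}}$ be independent $\mathcal{CN}(0,1)$ random variables. Define $$\mathcal{R}^{3}_{\mathrm{S}\to\mathrm{R}}=\log_2\frac{1+\bar\gamma_{\mathrm{R}}|h_{\mathrm{S},\mathrm{R}}|^2}{1+\bar\gamma_{\mathrm{E}}|h_{\mathrm{S},\mathrm{E}}|^2},\qquad \mathcal{R}^{3}_{\mathrm{R}\to\mathrm{D}}=\log_2\frac{1+\bar\gamma_{\mathrm{D}}|h_{\mathrm{R},\mathrm{D}}|^2}{1+\bar\gamma_{\mathrm{E}}|h_{\mathrm{R},\mathrm{E}}|^2},$$ $\mathcal{R}_3=\max\{\min\{\mathcal{R}^{3}_{\mathrm{S}\to\mathrm{R}},\mathcal{R}^{3}_{\mathrm{R}\to\mathrm{D}}\},0\}$ and $\mathcal{P}_3=\Pr(\mathcal{R}_3<\mathcal{R})$. Then $$\mathcal{P}_3=1-\mathrm{e}^{-\frac{2^{\mathcal{R}}-1}{\bar\gamma_{\mathrm{D}}}-\frac{2^{\mathcal{R}}-1}{\bar\gamma_{\mathrm{R}}}}\cdot\frac{1}{1+\frac{2^{\mathcal{R}}}{\bar\gamma_{\mathrm{D}}}\bar\gamma_{\mathrm{E}}}\cdot\frac{1}{1+\frac{2^{\mathcal{R}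}}{\bar\gamma_{\mathrm{R}}}\bar\gamma_{\mathrm{E}}}.$$
   Context: This models a decode-and-forward relay system (source S, relay R, destination D, eavesdropper E) where the eavesdropper overhears both the source's and the relay's transmissions. $\mathcal{CN}(0,1)$ denotes a circularly symmetric complex Gaussian random variable with zero mean and unit variance (Rayleigh fading). $\bar\gamma$'s are average SNRs, $\mathcal{R}_3$ the secrecy capacity and $\mathcal{P}_3$ the secrecy outage probability. *)

theory Defs
  imports "HOL-Probability.Probability"
begin

definition CN01_density :: "complex \<Rightarrow> ennreal" where
  "CN01_density z = ennreal (exp (- (cmod z)\<^sup>2) / pi)"

definition is_CN01 :: "'a measure \<Rightarrow> ('a \<Rightarrow> complex) \<Rightarrow> bool" where
  "is_CN01 M X \<longleftrightarrow> distributed M lborel X CN01_density"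

definition hop_rate :: "real \<Rightarrow> real \<Rightarrow> complex \<Rightarrow> complex \<Rightarrow> real" where
  "hop_rate gM gE hM hE = log 2 ((1 + gM * (cmod hM)\<^sup>2) / (1 + gE * (cmod hE)\<^sup>2))"

definition secrecy_capacity3 ::
  "real \<Rightarrow> real \<Rightarrow> real \<Rightarrow> complex \<Rightarrow> complex \<Rightarrow> complex \<Rightarrow> complex \<Rightarrow> real" where
  "secrecy_capacity3 gR gD gE hSR hRD hSE hRE =
     max (min (hop_rate gR gE hSR hSE) (hop_rate gD gE hRD hRE)) 0"

end

theory Submission
  imports Defs "HOL-Real_Asymp.Real_Asymp"
begin

(* If h is CN(0,1) then |h|^2 is Exp(1): pushing Lebesgue measure on the complex plane forward
   along z |-> |z|^2 gives pi times Lebesgue measure on [0, oo), because the disc {|z|^2 <= t}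
   has area pi t.  A hop has secrecy rate at least R iff
   2^R - 1 + 2^R gE |h_E|^2 <= gM |h_M|^2, and for independent U, V ~ Exp(1) Fubini gives
   P(c + b V <= a U) = E[exp (-(c + b V) / a)] = exp (-c / a) / (1 + b / a).
   The two hops use disjoint sets of channels, so their rates are independent; for R > 0 the
   capacity R_3 is below R iff one of the hop rates is, hence P_3 = 1 - (product of the two
   hop probabilities). *)

lemma emeasure_lborel_cmod_sq_le:
  "emeasure (lborel :: complex measure) {z. (cmod z)\<^sup>2 \<le> t} = ennreal (pi * max t 0)"
proof (cases "t \<ge> 0")
  case True
  have "(cmod z)\<^sup>2 \<le> t \<longleftrightarrow> cmod z \<le> sqrt t" for z :: complex
    using sqrt_ge_absD[of "cmod z" t] real_le_rsqrt[of "cmod z" t] by auto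
  then have "{z :: complex. (cmod z)\<^sup>2 \<le> t} = cball 0 (sqrt t)"
    unfolding set_eq_iff mem_Collect_eq mem_cball_0 by blast
  moreover have "unit_ball_vol 2 = pi"
    using eval_unit_ball_vol(1)[of Num.One] by simp
  ultimately show ?thesis
    using emeasure_cball[of "sqrt t" "0 :: complex"] True by simp
next
  case False
  have "\<not> (cmod z)\<^sup>2 \<le> t" for z :: complex
    using False zero_le_power2[of "cmod z"] by linarith
  then show ?thesis
    using False by simp
qed

lemma distr_lborel_cmod_sq:
  "distr (lborel :: complex measure) borel (\<lambda>z. (cmod z)\<^sup>2)
     = density lborel (\<lambda>s. ennreal pi * indicator {0..} s)"
  (is "?D = ?P")
proof (rule measure_eqI_generator_eq[where \<Omega>=UNIV and E="range atMost" and A="\<lambda>i. {..real i}"])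
  have eq: "emeasure ?D {..t} = ennreal (pi * max t 0) \<and> emeasure ?P {..t} = ennreal (pi * max t 0)"
    for t
  proof
    show "emeasure ?D {..t} = ennreal (pi * max t 0)"
      by (subst emeasure_distr)
         (auto simp: emeasure_lborel_cmod_sq_le[symmetric] intro!: arg_cong[where f="emeasure lborel"])
    have "emeasure ?P {..t} = (\<integral>\<^sup>+s. ennreal pi * indicator {0..t} s \<partial>lborel)"
      by (subst emeasure_density) (auto intro!: nn_integral_cong split: split_indicator)
    also have "\<dots> = ennreal (pi * max t 0)"
      by (subst nn_integral_cmult_indicator) (auto simp: ennreal_mult' emeasure_lborel_Icc_eq max_def)
    finally show "emeasure ?P {..t} = ennreal (pi * max t 0)" .
  qed
  show "Int_stable (range (atMost :: real \<Rightarrow> _))"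
    by (auto simp: Int_stable_def intro!: image_eqI[of _ _ "min _ _"])
  show "range atMost \<subseteq> Pow (UNIV :: real set)" "range (\<lambda>i. {..real i}) \<subseteq> range atMost"
    "(\<Union>i. {..real i}) = UNIV"
    by (auto intro: real_arch_simple)
  show "sets ?D = sigma_sets UNIV (range atMost)" "sets ?P = sigma_sets UNIV (range atMost)"
    by (simp_all add: borel_eq_atMost)
  show "emeasure ?D X = emeasure ?P X" if "X \<in> range atMost" for X
    using that eq by auto
  show "emeasure ?D {..real i} \<noteq> \<infinity>" for i
    using eq[of "real i"] by simp
qed

lemma nn_integral_lborel_cmod_sq:
  fixes g :: "real \<Rightarrow> ennreal"
  assumes [measurable]: "g \<in> borel_measurable borel"
  shows "(\<integral>\<^sup>+z. g ((cmod z)\<^sup>2) \<partial>(lborel :: complex measure))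
       = (\<integral>\<^sup>+s. ennreal pi * indicator {0..} s * g s \<partial>lborel)"
proof -
  have "(\<integral>\<^sup>+z. g ((cmod z)\<^sup>2) \<partial>(lborel :: complex measure))
      = (\<integral>\<^sup>+s. g s \<partial>distr (lborel :: complex measure) borel (\<lambda>z. (cmod z)\<^sup>2))"
    by (subst nn_integral_distr) auto
  then show ?thesis
    unfolding distr_lborel_cmod_sq by (subst (asm) nn_integral_density) auto
qed

lemma borel_measurable_CN01_density [measurable]: "CN01_density \<in> borel_measurable borel"
  unfolding CN01_density_def by measurable

lemma borel_measurable_CN01: "is_CN01 M X \<Longrightarrow> X \<in> borel_measurable M"
  unfolding is_CN01_def by (drule distributed_measurable) simp

lemma CN01_cmod_sq_exponential:
  assumes "is_CN01 M X"
  shows "distributed M lborel (\<lambda>\<omega>. (cmod (X \<omega>))\<^sup>2) (exponential_density 1)"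
proof -
  have X: "distributed M lborel X CN01_density"
    using assms by (simp add: is_CN01_def)
  have [measurable]: "X \<in> borel_measurable M"
    using assms by (rule borel_measurable_CN01)
  let ?Q = "distr (distr M lborel X) lborel (\<lambda>z. (cmod z)\<^sup>2)"
  have "distr M lborel (\<lambda>\<omega>. (cmod (X \<omega>))\<^sup>2) = ?Q"
    by (subst distr_distr) (auto simp: comp_def)
  also have "?Q = density lborel (exponential_density 1)"
  proof (rule measure_eqI)
    fix A :: "real set"
    assume A [measurable]: "A \<in> sets ?Q"
    have "(\<lambda>z :: complex. (cmod z)\<^sup>2) -` A \<in> sets borel"
      by (rule measurable_sets_borel[where M=borel]) (use A in simp_all)
    then have "emeasure ?Q A
        = (\<integral>\<^sup>+z. ennreal (exp (- (cmod z)\<^sup>2) / pi) * indicator A ((cmod z)\<^sup>2) \<partial>lborel)"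
      unfolding distributed_distr_eq_density[OF X] using A
      by (subst emeasure_distr, simp_all, subst emeasure_density)
         (auto simp: CN01_density_def intro!: nn_integral_cong split: split_indicator)
    also have "\<dots> = (\<integral>\<^sup>+s. ennreal pi * indicator {0..} s
                            * (ennreal (exp (- s) / pi) * indicator A s) \<partial>lborel)"
      by (rule nn_integral_lborel_cmod_sq) simp
    also have "\<dots> = (\<integral>\<^sup>+s. ennreal (exponential_density 1 s) * indicator A s \<partial>lborel)"
      by (intro nn_integral_cong)
         (auto simp: exponential_density_def indicator_def ennreal_mult'[symmetric])
    also have "\<dots> = emeasure (density lborel (exponential_density 1)) A"
      by (rule emeasure_density[symmetric]) (use A in simp_all)
    finally show "emeasure ?Q A = emeasure (density lborel (exponential_density 1)) A" .
  qed simp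
  finally show ?thesis
    unfolding distributed_def by simp
qed

lemma nn_integral_exp_atLeast:
  fixes C l t :: real
  assumes "0 < l" "0 \<le> C"
  shows "(\<integral>\<^sup>+s. ennreal (C * exp (- l * s)) * indicator {t..} s \<partial>lborel)
       = ennreal (C * exp (- l * t) / l)"
proof -
  have "((\<lambda>s. - C * exp (- l * s) / l) \<longlongrightarrow> 0) at_top"
    using \<open>0 < l\<close> by real_asymp
  then have "(\<integral>\<^sup>+s. ennreal (C * exp (- l * s)) * indicator {t..} s \<partial>lborel)
      = ennreal (0 - (- C * exp (- l * t) / l))"
    using assms by (intro nn_integral_FTC_atLeast) (auto intro!: derivative_eq_intros simp: field_simps)
  then show ?thesis
    by simp
qed

lemma emeasure_exponential_density_atLeast:
  assumes "0 < l" "0 \<le> t"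
  shows "emeasure (density lborel (exponential_density l)) {t..} = ennreal (exp (- t * l))"
proof -
  have "emeasure (density lborel (exponential_density l)) {t..}
      = (\<integral>\<^sup>+s. ennreal (l * exp (- l * s)) * indicator {t..} s \<partial>lborel)"
    using assms
    by (subst emeasure_density)
       (auto simp: exponential_density_def mult.commute intro!: nn_integral_cong split: split_indicator)
  also have "\<dots> = ennreal (l * exp (- l * t) / l)"
    using assms by (intro nn_integral_exp_atLeast) simp_all
  finally show ?thesis
    using assms by (simp add: mult.commute)
qed

lemma sets_pair_affine_le [measurable]:
  fixes a b c :: real
  shows "{(v, u). c + b * v \<le> a * u} \<in> sets (borel \<Otimes>\<^sub>M borel)"
proof -
  have "{(v, u). c + b * v \<le> a * u} = {x \<in> space (borel \<Otimes>\<^sub>M borel). c + b * fst x \<le> a * snd x}"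
    by (auto simp: space_pair_measure)
  also have "\<dots> \<in> sets (borel \<Otimes>\<^sub>M borel)"
    by measurable
  finally show ?thesis .
qed

lemma emeasure_exponential_pair_affine_le:
  fixes a b c :: real
  defines "D \<equiv> density lborel (exponential_density 1)"
  assumes a: "0 < a" and b: "0 \<le> b" and c: "0 \<le> c"
  shows "emeasure (D \<Otimes>\<^sub>M D) {(v, u). c + b * v \<le> a * u} = ennreal (exp (- c / a) / (1 + b / a))"
proof -
  interpret D: prob_space D
    unfolding D_def by (rule prob_space_exponential_density) simp
  define S where "S = {(v :: real, u :: real). c + b * v \<le> a * u}"
  have [measurable]: "S \<in> sets (borel \<Otimes>\<^sub>M borel)"
    unfolding S_def by (rule sets_pair_affine_le)
  have "emeasure (D \<Otimes>\<^sub>M D) S = (\<integral>\<^sup>+v. emeasure D (Pair v -` S) \<partial>D)"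
    by (rule D.emeasure_pair_measure_alt) (simp add: D_def)
  also have "\<dots> = (\<integral>\<^sup>+v. ennreal (exponential_density 1 v) * emeasure D (Pair v -` S) \<partial>lborel)"
    unfolding D_def
    by (rule nn_integral_density) (auto intro: D.measurable_emeasure_Pair[unfolded D_def] simp: D_def)
  also have "\<dots> = (\<integral>\<^sup>+v. ennreal (exp (- c / a) * exp (- (1 + b / a) * v)) * indicator {0..} v
                        \<partial>lborel)"
  proof (rule nn_integral_cong)
    fix v :: real
    show "ennreal (exponential_density 1 v) * emeasure D (Pair v -` S)
        = ennreal (exp (- c / a) * exp (- (1 + b / a) * v)) * indicator {0..} v"
    proof (cases "0 \<le> v")
      case True
      have "Pair v -` S = {(c + b * v) / a..}"
        using a by (auto simp: S_def pos_divide_le_eq mult.commute)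
      moreover have "0 \<le> (c + b * v) / a"
        using True a b c by simp
      ultimately have "emeasure D (Pair v -` S) = ennreal (exp (- ((c + b * v) / a)))"
        by (simp add: D_def emeasure_exponential_density_atLeast)
      moreover have "exp (- v) * exp (- ((c + b * v) / a)) = exp (- c / a) * exp (- (1 + b / a) * v)"
        using a by (simp add: field_simps flip: exp_add)
      ultimately show ?thesis
        using True by (simp add: exponential_density_def ennreal_mult'[symmetric])
    qed (simp add: exponential_density_def)
  qed
  also have "\<dots> = ennreal (exp (- c / a) / (1 + b / a))"
    using a b by (subst nn_integral_exp_atLeast) (auto intro: add_pos_nonneg)
  finally show ?thesis
    unfolding S_def .
qed

lemma (in prob_space) prob_affine_le_exponential:
  fixes U V :: "'a \<Rightarrow> real"
  assumes U: "distributed M lborel U (exponential_density 1)"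
    and V: "distributed M lborel V (exponential_density 1)"
    and indep: "indep_var borel V borel U"
    and "0 < a" "0 \<le> b" "0 \<le> c"
  shows "\<P>(\<omega> in M. c + b * V \<omega> \<le> a * U \<omega>) = exp (- c / a) / (1 + b / a)"
proof -
  let ?D = "density lborel (exponential_density 1)"
  have distr_eq: "distr M borel X = ?D" if "distributed M lborel X (exponential_density 1)" for X
    using distributed_distr_eq_density[OF that] distributed_measurable[OF that]
    by (simp cong: distr_cong)
  have [measurable]: "U \<in> borel_measurable M" "V \<in> borel_measurable M"
    using distributed_measurable[OF U] distributed_measurable[OF V] by simp_all
  have "emeasure M {\<omega> \<in> space M. c + b * V \<omega> \<le> a * U \<omega>}
      = emeasure (distr M (borel \<Otimes>\<^sub>M borel) (\<lambda>\<omega>. (V \<omega>, U \<omega>))) {(v, u). c + b * v \<le> a * u}"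
    by (subst emeasure_distr[OF _ sets_pair_affine_le]) (auto intro!: arg_cong[where f="emeasure M"])
  also have "\<dots> = emeasure (?D \<Otimes>\<^sub>M ?D) {(v, u). c + b * v \<le> a * u}"
    using indep by (simp add: indep_var_distribution_eq distr_eq[OF U] distr_eq[OF V])
  also have "\<dots> = ennreal (exp (- c / a) / (1 + b / a))"
    using assms by (intro emeasure_exponential_pair_affine_le)
  finally show ?thesis
    using assms by (simp add: emeasure_eq_measure add_pos_nonneg)
qed

lemma (in prob_space) indep_var_from_indep_vars:
  assumes ind: "indep_vars (\<lambda>_. N) X I" and "i \<in> I" "j \<in> I" "i \<noteq> j"
  shows "indep_var N (X i) N (X j)"
proof -
  have "indep_var (Pi\<^sub>M {i} (\<lambda>_. N)) (\<lambda>\<omega>. restrict (\<lambda>n. X n \<omega>) {i})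
                  (Pi\<^sub>M {j} (\<lambda>_. N)) (\<lambda>\<omega>. restrict (\<lambda>n. X n \<omega>) {j})"
    by (rule indep_var_restrict[OF ind]) (use assms in auto)
  then have "indep_var N ((\<lambda>f. f i) \<circ> (\<lambda>\<omega>. restrict (\<lambda>n. X n \<omega>) {i}))
                       N ((\<lambda>f. f j) \<circ> (\<lambda>\<omega>. restrict (\<lambda>n. X n \<omega>) {j}))"
    by (rule indep_var_compose) measurable
  then show ?thesis
    by (simp add: comp_def)
qed

lemma (in prob_space) indep_var_pairs_from_indep_vars:
  assumes ind: "indep_vars (\<lambda>_. N) X I"
    and "{i, j} \<subseteq> I" "{k, l} \<subseteq> I" "{i, j} \<inter> {k, l} = {}"
  shows "indep_var (N \<Otimes>\<^sub>M N) (\<lambda>\<omega>. (X i \<omega>, X j \<omega>)) (N \<Otimes>\<^sub>M N) (\<lambda>\<omega>. (X k \<omega>, X l \<omega>))"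
proof -
  have "indep_var (Pi\<^sub>M {i, j} (\<lambda>_. N)) (\<lambda>\<omega>. restrict (\<lambda>n. X n \<omega>) {i, j})
                  (Pi\<^sub>M {k, l} (\<lambda>_. N)) (\<lambda>\<omega>. restrict (\<lambda>n. X n \<omega>) {k, l})"
    by (rule indep_var_restrict[OF ind]) (use assms in auto)
  then have "indep_var (N \<Otimes>\<^sub>M N) ((\<lambda>f. (f i, f j)) \<circ> (\<lambda>\<omega>. restrict (\<lambda>n. X n \<omega>) {i, j}))
                       (N \<Otimes>\<^sub>M N) ((\<lambda>f. (f k, f l)) \<circ> (\<lambda>\<omega>. restrict (\<lambda>n. X n \<omega>) {k, l}))"
    by (rule indep_var_compose) measurable
  then show ?thesis
    by (simp add: comp_def)
qed

lemma borel_measurable_hop_rate [measurable]: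
  assumes [measurable]: "f \<in> borel_measurable M" "g \<in> borel_measurable M"
  shows "(\<lambda>x. hop_rate gM gE (f x) (g x)) \<in> borel_measurable M"
  unfolding hop_rate_def by measurable

lemma (in prob_space) indep_var_hop_rates:
  assumes "indep_var (borel \<Otimes>\<^sub>M borel) (\<lambda>\<omega>. (hM \<omega>, hE \<omega>))
                     (borel \<Otimes>\<^sub>M borel) (\<lambda>\<omega>. (hM' \<omega>, hE' \<omega>))"
  shows "indep_var borel (\<lambda>\<omega>. hop_rate gM gE (hM \<omega>) (hE \<omega>))
                   borel (\<lambda>\<omega>. hop_rate gM' gE' (hM' \<omega>) (hE' \<omega>))"
proof -
  have "indep_var borel ((\<lambda>p. hop_rate gM gE (fst p) (snd p)) \<circ> (\<lambda>\<omega>. (hM \<omega>, hE \<omega>)))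
                   borel ((\<lambda>p. hop_rate gM' gE' (fst p) (snd p)) \<circ> (\<lambda>\<omega>. (hM' \<omega>, hE' \<omega>)))"
    using assms by (rule indep_var_compose) simp_all
  then show ?thesis
    by (simp add: comp_def)
qed

lemma hop_rate_ge_iff:
  assumes "0 \<le> gM" "0 \<le> gE"
  shows "R \<le> hop_rate gM gE m w
     \<longleftrightarrow> 2 powr R - 1 + 2 powr R * gE * (cmod w)\<^sup>2 \<le> gM * (cmod m)\<^sup>2"
proof -
  have num: "0 < 1 + gM * (cmod m)\<^sup>2" and den: "0 < 1 + gE * (cmod w)\<^sup>2"
    using assms by (simp_all add: add_pos_nonneg)
  have "R \<le> hop_rate gM gE m w \<longleftrightarrow> 2 powr R \<le> (1 + gM * (cmod m)\<^sup>2) / (1 + gE * (cmod w)\<^sup>2)"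
    unfolding hop_rate_def using num den by (intro le_log_iff) auto
  also have "\<dots> \<longleftrightarrow> 2 powr R * (1 + gE * (cmod w)\<^sup>2) \<le> 1 + gM * (cmod m)\<^sup>2"
    using den by (simp add: pos_le_divide_eq)
  finally show ?thesis
    by (simp add: algebra_simps)
qed

lemma (in prob_space) prob_hop_rate_ge:
  assumes "is_CN01 M hM" "is_CN01 M hE" and indep: "indep_var borel hE borel hM"
    and "0 < gM" "0 \<le> gE" "0 \<le> R"
  shows "\<P>(\<omega> in M. R \<le> hop_rate gM gE (hM \<omega>) (hE \<omega>))
       = exp (- (2 powr R - 1) / gM) * (1 / (1 + (2 powr R / gM) * gE))"
proof -
  have "indep_var borel ((\<lambda>z. (cmod z)\<^sup>2) \<circ> hE) borel ((\<lambda>z. (cmod z)\<^sup>2) \<circ> hM)"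
    using indep by (rule indep_var_compose) simp_all
  then have "\<P>(\<omega> in M. 2 powr R - 1 + 2 powr R * gE * (cmod (hE \<omega>))\<^sup>2 \<le> gM * (cmod (hM \<omega>))\<^sup>2)
      = exp (- (2 powr R - 1) / gM) / (1 + 2 powr R * gE / gM)"
    using assms
    by (intro prob_affine_le_exponential CN01_cmod_sq_exponential)
       (simp_all add: comp_def ge_one_powr_ge_zero)
  then show ?thesis
    using assms by (simp add: hop_rate_ge_iff)
qed

lemma secrecy_capacity3_less_iff:
  "0 < R \<Longrightarrow> secrecy_capacity3 gR gD gE hSR hRD hSE hRE < R
     \<longleftrightarrow> \<not> (R \<le> hop_rate gR gE hSR hSE \<and> R \<le> hop_rate gD gE hRD hRE)"
  by (auto simp: secrecy_capacity3_def)

theorem theorem7: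
  fixes M :: "'a measure"
    and hSR hRD hSE hRE :: "'a \<Rightarrow> complex"
    and gR gD gE R :: real
  assumes "prob_space M"
    and "gR > 0" and "gD > 0" and "gE > 0" and "R > 0"
    and "is_CN01 M hSR" and "is_CN01 M hRD" and "is_CN01 M hSE" and "is_CN01 M hRE"
    and "prob_space.indep_vars M (\<lambda>_. borel) (\<lambda>i. [hSR, hRD, hSE, hRE] ! i) {0..<4::nat}"
  shows "measure M {\<omega> \<in> space M.
             secrecy_capacity3 gR gD gE (hSR \<omega>) (hRD \<omega>) (hSE \<omega>) (hRE \<omega>) < R}
         = 1 - exp (- (2 powr R - 1) / gD - (2 powr R - 1) / gR)
               * (1 / (1 + (2 powr R / gD) * gE))
               * (1 / (1 + (2 powr R / gR) * gE))"
proof -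
  interpret prob_space M by fact
  note ind = assms(10)
  let ?rSR = "\<lambda>\<omega>. hop_rate gR gE (hSR \<omega>) (hSE \<omega>)"
    and ?rRD = "\<lambda>\<omega>. hop_rate gD gE (hRD \<omega>) (hRE \<omega>)"
  have [measurable]: "hSR \<in> borel_measurable M" "hRD \<in> borel_measurable M"
    "hSE \<in> borel_measurable M" "hRE \<in> borel_measurable M"
    using assms(6-9) by (simp_all add: borel_measurable_CN01)
  have SR: "\<P>(\<omega> in M. R \<le> ?rSR \<omega>) = exp (- (2 powr R - 1) / gR) * (1 / (1 + (2 powr R / gR) * gE))"
    using assms indep_var_from_indep_vars[OF ind, of 2 0] by (intro prob_hop_rate_ge) simp_all
  have RD: "\<P>(\<omega> in M. R \<le> ?rRD \<omega>) = exp (- (2 powr R - 1) / gD) * (1 / (1 + (2 powr R / gD) * gE))"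
    using assms indep_var_from_indep_vars[OF ind, of 3 1] by (intro prob_hop_rate_ge) simp_all
  have "indep_var borel ?rSR borel ?rRD"
    using indep_var_pairs_from_indep_vars[OF ind, of 0 2 1 3] by (intro indep_var_hop_rates) simp
  from prob_indep_random_variable[OF this, of "{R..}" "{R..}"]
  have both: "\<P>(\<omega> in M. R \<le> ?rSR \<omega> \<and> R \<le> ?rRD \<omega>)
      = \<P>(\<omega> in M. R \<le> ?rSR \<omega>) * \<P>(\<omega> in M. R \<le> ?rRD \<omega>)"
    by simp
  have exp_split: "exp (- x / gD - x / gR) = exp (- x / gD) * exp (- x / gR)" for x
    by (simp add: exp_diff exp_minus field_simps)
  have "\<P>(\<omega> in M. secrecy_capacity3 gR gD gE (hSR \<omega>) (hRD \<omega>) (hSE \<omega>) (hRE \<omega>) < R)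
      = 1 - \<P>(\<omega> in M. R \<le> ?rSR \<omega> \<and> R \<le> ?rRD \<omega>)"
    unfolding secrecy_capacity3_less_iff[OF \<open>R > 0\<close>] by (rule prob_neg) measurable
  also have "\<dots> = 1 - exp (- (2 powr R - 1) / gD - (2 powr R - 1) / gR)
                     * (1 / (1 + (2 powr R / gD) * gE)) * (1 / (1 + (2 powr R / gR) * gE))"
    unfolding both SR RD exp_split by (simp only: mult_ac)
  finally show ?thesis .
qed

end
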